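(* Let $R$ be a commutative ring and $N\subset M$ $R$-modules with $N$ finitely generated and $M$ finitely presented. For each positive integer $r$, the ideal $\mathrm{Fitt}_R(M/N)$ annihilates the cokernel of the canonical map $\bigwedge^r_RN\to\bigwedge^r_RM$.
   Context: $\mathrm{Fitt}_R$ denotes the $0$th Fitting ideal. *)

theory Defs
  imports Main HOL.Modules "HOL-Library.Function_Algebras" "HOL-Combinatorics.Permutations"
begin

text \<open>Setting: a commutative ring is a type 'a of class comm_ring_1; an R-module M is a type 'm
  of class ab_group_add with a scalar multiplication sc satisfying the module axioms
  (locale module from Main); submodules are sets N with module.subspace sc N.\<close>

definition pscale :: "'a::comm_ring_1 \<Rightarrow> ('i \<Rightarrow> 'a) \<Rightarrow> ('i \<Rightarrow> 'a)" where
  "pscale c f = (\<lambda>x. c * f x)"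

definition ideal_gen :: "'a::comm_ring_1 set \<Rightarrow> 'a set" where
  "ideal_gen S = module.span ((*)) S"

definition detn :: "nat \<Rightarrow> (nat \<Rightarrow> nat \<Rightarrow> 'a::comm_ring_1) \<Rightarrow> 'a" where
  "detn n A = (\<Sum>p | p permutes {..<n}. of_int (sign p) * (\<Prod>i<n. A i (p i)))"

definition fin_gen_sub :: "('a::comm_ring_1 \<Rightarrow> 'm::ab_group_add \<Rightarrow> 'm) \<Rightarrow> 'm set \<Rightarrow> bool" where
  "fin_gen_sub sc N \<longleftrightarrow> (\<exists>B. finite B \<and> B \<subseteq> N \<and> module.span sc B = N)"

text \<open>M (the whole type) is finitely presented: generated by finitely many elements g 0..g (n-1)
  whose module of relations (a submodule of R^n, coordinates outside {..<n} zero) is f.g.\<close>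
definition fin_presented :: "('a::comm_ring_1 \<Rightarrow> 'm::ab_group_add \<Rightarrow> 'm) \<Rightarrow> bool" where
  "fin_presented sc \<longleftrightarrow> (\<exists>n (g :: nat \<Rightarrow> 'm).
     module.span sc (g ` {..<n}) = UNIV \<and>
     fin_gen_sub pscale {c :: nat \<Rightarrow> 'a. (\<forall>j\<ge>n. c j = 0) \<and> (\<Sum>j<n. sc (c j) (g j)) = 0})"

text \<open>0th Fitting ideal of M/N (M = whole type): for generators g 0..g (n-1) of M/N
  (i.e. span of the g j plus N is M), the ideal generated by the determinants of all n x n
  matrices whose rows are relations of the images of the g j in M/N; we take the ideal
  generated by these minors for all finite generating families (the standard
  presentation-independence makes this the usual Fitt_0).\<close>
definition fitt_quot :: "('a::comm_ring_1 \<Rightarrow> 'm::ab_group_add \<Rightarrow> 'm) \<Rightarrow> 'm set \<Rightarrow> 'a set" where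
  "fitt_quot sc N = ideal_gen {detn n A | n (g :: nat \<Rightarrow> 'm) A.
      (\<forall>m. \<exists>v\<in>module.span sc (g ` {..<n}). \<exists>y\<in>N. m = v + y) \<and>
      (\<forall>i<n. (\<Sum>j<n. sc (A i j) (g j)) \<in> N)}"

text \<open>Exterior power as F/K: F the free module with basis the r-tuples of M (functions
  'm list \<Rightarrow> 'a, basis vectors ebas xs), K the submodule generated by the multilinearity
  and alternating relations.\<close>
definition ebas :: "'m list \<Rightarrow> ('m list \<Rightarrow> 'a::comm_ring_1)" where
  "ebas xs = (\<lambda>ys. if ys = xs then 1 else 0)"

definition free_tuples :: "('a::comm_ring_1 \<Rightarrow> 'm \<Rightarrow> 'm) \<Rightarrow> nat \<Rightarrow> ('m list \<Rightarrow> 'a) set" where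
  "free_tuples sc r = module.span pscale {ebas xs | xs. length xs = r}"

definition ext_rels :: "('a::comm_ring_1 \<Rightarrow> 'm::ab_group_add \<Rightarrow> 'm) \<Rightarrow> nat \<Rightarrow> ('m list \<Rightarrow> 'a) set" where
  "ext_rels sc r =
     {ebas (xs[i := x + y]) - ebas (xs[i := x]) - ebas (xs[i := y]) | xs i x y. length xs = r \<and> i < r}
   \<union> {ebas (xs[i := sc c x]) - pscale c (ebas (xs[i := x])) | xs i c x. length xs = r \<and> i < r}
   \<union> {ebas xs | xs. length xs = r \<and> (\<exists>i j. i < r \<and> j < r \<and> i \<noteq> j \<and> xs ! i = xs ! j)}"

text \<open>Preimage in F of the image of the canonical map from wedge^r N to wedge^r M:
  span of the basis tuples with entries in N, plus K.\<close>
definition ext_image_sub :: "('a::comm_ring_1 \<Rightarrow> 'm::ab_group_add \<Rightarrow> 'm) \<Rightarrow> 'm set \<Rightarrow> nat \<Rightarrow> ('m list \<Rightarrow> 'a) set" where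
  "ext_image_sub sc N r =
     module.span pscale ({ebas ys | ys. length ys = r \<and> set ys \<subseteq> N} \<union> ext_rels sc r)"

end

theory Submission
  imports Defs
begin

text \<open>Let \<open>g 0, ..., g (n - 1)\<close> generate \<open>M\<close> modulo \<open>N\<close> and let the rows of the \<open>n \<times> n\<close> matrix
  \<open>A\<close> be relations, \<open>f i = (\<Sum>l<n. A i l \<cdot> g l) \<in> N\<close>. Modulo the image of the \<open>r\<close>-th exterior
  power of \<open>N\<close>, multilinearity and alternation reduce every wedge of \<open>r\<close> elements of \<open>M\<close> to
  wedges \<open>g 0 \<and> ... \<and> g (k - 1) \<and> y\<close>, with \<open>y\<close> a wedge of elements of \<open>N\<close>, after relabelling
  the generators. For a \<open>k\<close>-set \<open>S\<close> of rows, the wedge of the \<open>f i\<close>, \<open>i \<in> S\<close>, is the sum over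
  \<open>k\<close>-sets \<open>T\<close> of columns of the minors \<open>A[S, T]\<close> times the wedge of the \<open>g j\<close>, \<open>j \<in> T\<close>.
  Laplace expansion along \<open>k\<close> rows, with the complementary cofactors \<open>c S\<close>, gives
  \<open>\<Sum>S. c S \<cdot> A[S, T] = det A\<close> for \<open>T = {..<k}\<close> and \<open>0\<close> for every other \<open>T\<close>. Hence
  \<open>det A \<cdot> (g 0 \<and> ... \<and> g (k - 1) \<and> y)\<close> is the sum of the \<open>c S \<cdot> (f\<^sub>S \<and> y)\<close>, which comes
  from the exterior power of \<open>N\<close>.\<close>

section \<open>Laplace expansion along several rows\<close>

lemma detn_cong:
  assumes "\<And>i j. i < n \<Longrightarrow> j < n \<Longrightarrow> A i j = B i j"
  shows "detn n A = detn n B"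
  unfolding detn_def
proof (intro sum.cong refl arg_cong2[where f="(*)"] prod.cong)
  fix p i assume "p \<in> {p. p permutes {..<n}}" and "i \<in> {..<n}"
  then show "A i (p i) = B i (p i)"
    using assms permutes_in_image by fastforce
qed

lemma detn_permute_cols:
  assumes \<rho>: "\<rho> permutes {..<n}"
  shows "detn n (\<lambda>i j. A i (\<rho> j)) = of_int (sign \<rho>) * detn n A"
proof -
  have "detn n (\<lambda>i j. A i (\<rho> j)) =
      (\<Sum>p | p permutes {..<n}. of_int (sign p) * (\<Prod>i<n. A i ((\<rho> \<circ> p) i)))"
    unfolding detn_def by simp
  also have "\<dots> = (\<Sum>q | q permutes {..<n}. of_int (sign \<rho>) * (of_int (sign q) * (\<Prod>i<n. A i (q i))))"
  proof (rule sum.reindex_bij_witness[where i="\<lambda>q. inv \<rho> \<circ> q" and j="\<lambda>p. \<rho> \<circ> p"])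
    fix q assume "q \<in> {q. q permutes {..<n}}"
    then show "\<rho> \<circ> (inv \<rho> \<circ> q) = q" "inv \<rho> \<circ> q \<in> {p. p permutes {..<n}}"
      using permutes_inverses(1)[OF \<rho>] permutes_compose[OF _ permutes_inv[OF \<rho>]]
      by (auto simp: fun_eq_iff)
  next
    fix p assume p: "p \<in> {p. p permutes {..<n}}"
    show "inv \<rho> \<circ> (\<rho> \<circ> p) = p" "\<rho> \<circ> p \<in> {p. p permutes {..<n}}"
      using permutes_inverses(2)[OF \<rho>] p permutes_compose \<rho> by (auto simp: fun_eq_iff)
    have "sign (\<rho> \<circ> p) = sign \<rho> * sign p"
      using \<rho> p by (simp add: sign_compose permutes_imp_permutation[OF finite_lessThan])
    then have "of_int (sign \<rho>) * of_int (sign (\<rho> \<circ> p)) = (of_int (sign p) :: 'a)"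
      by (simp flip: of_int_mult add: mult.assoc[symmetric])
    then show "of_int (sign \<rho>) * (of_int (sign (\<rho> \<circ> p)) * (\<Prod>i<n. A i ((\<rho> \<circ> p) i))) =
        of_int (sign p) * (\<Prod>i<n. A i ((\<rho> \<circ> p) i))"
      by (simp add: mult.assoc[symmetric])
  qed
  also have "\<dots> = of_int (sign \<rho>) * detn n A"
    unfolding detn_def by (simp add: sum_distrib_left)
  finally show ?thesis .
qed

lemma detn_identical_cols:
  assumes "a < n" "b < n" "a \<noteq> b" and eq: "\<And>i. i < n \<Longrightarrow> A i a = A i b"
  shows "detn n A = 0"
proof -
  let ?t = "Transposition.transpose a b"
  let ?P = "{p. p permutes {..<n}}"
  define F where "F p = (\<Prod>i<n. A i (p i))" for p
  have t: "?t permutes {..<n}"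
    using assms by (intro permutes_swap_id) auto
  have F_swap: "F (?t \<circ> p) = F p" for p
    unfolding F_def using eq by (intro prod.cong) (auto simp: Transposition.transpose_def)
  have even_swap: "evenperm (?t \<circ> p) \<longleftrightarrow> \<not> evenperm p" if "p \<in> ?P" for p
  proof -
    have "permutation ?t" "permutation p"
      using t that permutation_permutes by blast+
    then show ?thesis
      using \<open>a \<noteq> b\<close> by (simp add: evenperm_comp evenperm_swap)
  qed
  have "detn n A = (\<Sum>p\<in>?P. if evenperm p then F p else - F p)"
    unfolding detn_def F_def by (intro sum.cong refl) (simp add: sign_def)
  also have "\<dots> = (\<Sum>p\<in>?P \<inter> {p. evenperm p}. F p) + (\<Sum>p\<in>?P \<inter> - {p. evenperm p}. - F p)"
    by (rule sum.If_cases) (simp add: finite_permutations)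
  also have "(\<Sum>p\<in>?P \<inter> - {p. evenperm p}. - F p) = (\<Sum>p\<in>?P \<inter> {p. evenperm p}. - F p)"
    by (rule sum.reindex_bij_witness[where i="\<lambda>p. ?t \<circ> p" and j="\<lambda>p. ?t \<circ> p"])
      (use even_swap F_swap permutes_compose[OF _ t] in \<open>auto simp: fun_eq_iff\<close>)
  finally show ?thesis
    by (simp add: sum_negf)
qed

lemma bij_betw_nth_sorted_list_of_set:
  assumes "finite S" "card S = k"
  shows "bij_betw (\<lambda>t. sorted_list_of_set S ! t) {..<k} S"
  using assms by (intro bij_betw_nth) simp_all

lemma nth_sorted_list_of_set_lessThan: "t < k \<Longrightarrow> sorted_list_of_set {..<k} ! t = t"
  by (simp add: lessThan_atLeast0)

lemma permutes_sorted_prefix_iff: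
  assumes S: "finite S" "card S = k"
    and p: "p permutes {..<n}" "\<forall>t<k. p (sorted_list_of_set S ! t) = t"
  shows "p i < k \<longleftrightarrow> i \<in> S"
proof
  assume "i \<in> S"
  then obtain t where "t < k" "i = sorted_list_of_set S ! t"
    using bij_betw_imp_surj_on[OF bij_betw_nth_sorted_list_of_set[OF S]] by force
  then show "p i < k"
    using p by simp
next
  assume pi: "p i < k"
  then have "p (sorted_list_of_set S ! p i) = p i"
    using p by simp
  then have "sorted_list_of_set S ! p i = i"
    using permutes_inj[OF p(1)] by (simp add: inj_eq)
  then show "i \<in> S"
    using bij_betw_apply[OF bij_betw_nth_sorted_list_of_set[OF S]] pi by force
qed

definition minor :: "nat \<Rightarrow> (nat \<Rightarrow> nat \<Rightarrow> 'a::comm_ring_1) \<Rightarrow> nat set \<Rightarrow> nat set \<Rightarrow> 'a" where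
  "minor k A S T = (\<Sum>\<sigma> | \<sigma> permutes {..<k}.
     of_int (sign \<sigma>) * (\<Prod>t<k. A (sorted_list_of_set S ! t) (sorted_list_of_set T ! \<sigma> t)))"

text \<open>The complementary minor of rows \<open>S\<close> and columns \<open>{..<k}\<close>, with the sign of the Laplace
  expansion built in: the sum runs over the permutations that send \<open>S\<close> monotonically onto
  \<open>{..<k}\<close>.\<close>
definition compl_cofactor :: "nat \<Rightarrow> nat \<Rightarrow> (nat \<Rightarrow> nat \<Rightarrow> 'a::comm_ring_1) \<Rightarrow> nat set \<Rightarrow> 'a" where
  "compl_cofactor n k A S = (\<Sum>p | p permutes {..<n} \<and> (\<forall>t<k. p (sorted_list_of_set S ! t) = t).
     of_int (sign p) * (\<Prod>i\<in>{..<n} - S. A i (p i)))"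

lemma minor_lessThan_cols:
  "minor k A S {..<k} =
    (\<Sum>\<sigma> | \<sigma> permutes {..<k}. of_int (sign \<sigma>) * (\<Prod>t<k. A (sorted_list_of_set S ! t) (\<sigma> t)))"
  unfolding minor_def
proof (intro sum.cong refl arg_cong2[where f="(*)"] prod.cong)
  fix \<sigma> t assume "\<sigma> \<in> {\<sigma>. \<sigma> permutes {..<k}}" "t \<in> {..<k}"
  then have "\<sigma> t < k"
    using permutes_in_image by fastforce
  then show "A (sorted_list_of_set S ! t) (sorted_list_of_set {..<k} ! \<sigma> t) = A (sorted_list_of_set S ! t) (\<sigma> t)"
    by (simp add: nth_sorted_list_of_set_lessThan)
qed

lemma minor_lessThan_rows:
  "minor k A {..<k} T =
    (\<Sum>\<sigma> | \<sigma> permutes {..<k}. of_int (sign \<sigma>) * (\<Prod>t<k. A t (sorted_list_of_set T ! \<sigma> t)))"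
  unfolding minor_def by (simp add: nth_sorted_list_of_set_lessThan)

lemma detn_term_factor:
  assumes S: "S \<subseteq> {..<n}" "card S = k"
    and p: "p permutes {..<n}" "\<forall>t<k. p (sorted_list_of_set S ! t) = t"
    and \<sigma>: "\<sigma> permutes {..<k}"
  shows "of_int (sign (\<sigma> \<circ> p)) * (\<Prod>i<n. A i ((\<sigma> \<circ> p) i)) =
    (of_int (sign p) * (\<Prod>i\<in>{..<n} - S. A i (p i))) *
    (of_int (sign \<sigma>) * (\<Prod>t<k. A (sorted_list_of_set S ! t) (\<sigma> t)))"
proof -
  have fin: "finite S"
    using S(1) finite_subset by blast
  have "k \<le> n"
    using card_mono[OF _ S(1)] S(2) by simp
  then have "\<sigma> permutes {..<n}"
    using permutes_subset[OF \<sigma>] by auto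
  then have sign: "sign (\<sigma> \<circ> p) = sign \<sigma> * sign p"
    using p(1) by (simp add: sign_compose permutes_imp_permutation[OF finite_lessThan])
  have outside: "(\<Prod>i\<in>{..<n} - S. A i ((\<sigma> \<circ> p) i)) = (\<Prod>i\<in>{..<n} - S. A i (p i))"
  proof (rule prod.cong[OF refl])
    fix i assume "i \<in> {..<n} - S"
    then have "p i \<notin> {..<k}"
      using permutes_sorted_prefix_iff[OF fin S(2) p] by auto
    then show "A i ((\<sigma> \<circ> p) i) = A i (p i)"
      using permutes_not_in[OF \<sigma>] by simp
  qed
  have inside: "(\<Prod>i\<in>S. A i ((\<sigma> \<circ> p) i)) = (\<Prod>t<k. A (sorted_list_of_set S ! t) (\<sigma> t))"
    using p(2)
    by (simp add: prod.reindex_bij_betw[OF bij_betw_nth_sorted_list_of_set[OF fin S(2)], symmetric])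
  have split: "(\<Prod>i<n. A i ((\<sigma> \<circ> p) i)) =
      (\<Prod>i\<in>{..<n} - S. A i ((\<sigma> \<circ> p) i)) * (\<Prod>i\<in>S. A i ((\<sigma> \<circ> p) i))"
    by (rule prod.subset_diff[OF S(1)]) simp
  show ?thesis
    unfolding split outside inside sign of_int_mult by (simp add: mult_ac)
qed

lemma permutes_compose_through_prefix:
  assumes S: "S \<subseteq> {..<n}" "card S = k"
    and p: "p permutes {..<n}" "\<forall>t<k. p (sorted_list_of_set S ! t) = t"
    and \<sigma>: "\<sigma> permutes {..<k}"
  shows "\<sigma> \<circ> p permutes {..<n}" and "{i. i < n \<and> (\<sigma> \<circ> p) i < k} = S"
    and "(\<lambda>t. if t < k then (\<sigma> \<circ> p) (sorted_list_of_set S ! t) else t) = \<sigma>"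
proof -
  have "k \<le> n"
    using card_mono[OF _ S(1)] S(2) by simp
  then show "\<sigma> \<circ> p permutes {..<n}"
    using permutes_compose[OF p(1)] permutes_subset[OF \<sigma>] by auto
  show "{i. i < n \<and> (\<sigma> \<circ> p) i < k} = S"
    using permutes_sorted_prefix_iff[OF finite_subset[OF S(1)] S(2) p] S(1) permutes_in_image[OF \<sigma>]
    by auto
  show "(\<lambda>t. if t < k then (\<sigma> \<circ> p) (sorted_list_of_set S ! t) else t) = \<sigma>"
    using p(2) permutes_not_in[OF \<sigma>] by (auto simp: fun_eq_iff)
qed

lemma permutes_factor_through_prefix:
  assumes q: "q permutes {..<n}" and "k \<le> n"
    and S_def: "S = {i. i < n \<and> q i < k}"
    and \<sigma>_def: "\<sigma> = (\<lambda>t. if t < k then q (sorted_list_of_set S ! t) else t)"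
  shows "S \<subseteq> {..<n} \<and> card S = k" and "\<sigma> permutes {..<k}"
    and "inv \<sigma> \<circ> q permutes {..<n}" and "\<forall>t<k. (inv \<sigma> \<circ> q) (sorted_list_of_set S ! t) = t"
proof -
  have "inj_on q S"
    using permutes_inj[OF q] by (rule inj_on_subset) simp
  moreover have "q ` S = {..<k}"
  proof
    show "{..<k} \<subseteq> q ` S"
    proof
      fix y assume "y \<in> {..<k}"
      moreover obtain i where "i < n" "q i = y"
        using \<open>y \<in> {..<k}\<close> \<open>k \<le> n\<close> permutes_image[OF q] by (metis image_iff lessThan_iff order_less_le_trans)
      ultimately show "y \<in> q ` S"
        unfolding S_def by blast
    qed
  qed (auto simp: S_def)
  ultimately have bq: "bij_betw q S {..<k}"
    unfolding bij_betw_def by blast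
  show S: "S \<subseteq> {..<n} \<and> card S = k"
    using bij_betw_same_card[OF bq] by (auto simp: S_def)
  have "bij_betw (q \<circ> (\<lambda>t. sorted_list_of_set S ! t)) {..<k} {..<k}"
    using S finite_subset[of S "{..<n}"]
    by (intro bij_betw_trans[OF bij_betw_nth_sorted_list_of_set bq]) auto
  then have "bij_betw \<sigma> {..<k} {..<k}"
    by (rule bij_betw_cong[THEN iffD1, rotated]) (simp add: \<sigma>_def)
  then show \<sigma>: "\<sigma> permutes {..<k}"
    by (rule bij_imp_permutes) (simp add: \<sigma>_def)
  then have "\<sigma> permutes {..<n}"
    using permutes_subset \<open>k \<le> n\<close> by fastforce
  then show "inv \<sigma> \<circ> q permutes {..<n}"
    using permutes_compose[OF q permutes_inv] by blast
  show "\<forall>t<k. (inv \<sigma> \<circ> q) (sorted_list_of_set S ! t) = t"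
  proof (intro allI impI)
    fix t assume "t < k"
    then have "q (sorted_list_of_set S ! t) = \<sigma> t"
      by (simp add: \<sigma>_def)
    then show "(inv \<sigma> \<circ> q) (sorted_list_of_set S ! t) = t"
      using permutes_inverses(2)[OF \<sigma>] by simp
  qed
qed

lemma detn_laplace_rows:
  assumes "k \<le> n"
  shows "(\<Sum>S | S \<subseteq> {..<n} \<and> card S = k. compl_cofactor n k A S * minor k A S {..<k}) = detn n A"
proof -
  let ?Sets = "{S. S \<subseteq> {..<n} \<and> card S = k}"
  let ?Perms = "{\<sigma>. \<sigma> permutes {..<k}}"
  define P where "P S = {p. p permutes {..<n} \<and> (\<forall>t<k. p (sorted_list_of_set S ! t) = t)}" for S
  define G where "G = (\<lambda>(S, p, \<sigma>). (of_int (sign p) * (\<Prod>i\<in>{..<n} - S. A i (p i))) *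
    (of_int (sign \<sigma>) * (\<Prod>t<k. A (sorted_list_of_set S ! t) (\<sigma> t))))"
  define rows where "rows q = {i. i < n \<and> q i < k}" for q :: "nat \<Rightarrow> nat"
  define perm where "perm q = (\<lambda>t. if t < k then q (sorted_list_of_set (rows q) ! t) else t)" for q
  have fin: "finite ?Sets" "finite (P S)" "finite ?Perms" for S
    by (auto simp: P_def finite_permutations intro: finite_subset[of _ "Pow {..<n}"]
        finite_subset[OF _ finite_permutations[of "{..<n}"]])
  have "(\<Sum>S\<in>?Sets. compl_cofactor n k A S * minor k A S {..<k}) =
      (\<Sum>S\<in>?Sets. \<Sum>p\<in>P S. \<Sum>\<sigma>\<in>?Perms. G (S, p, \<sigma>))"
    unfolding compl_cofactor_def minor_lessThan_cols P_def G_def by (simp add: sum_product)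
  also have "\<dots> = (\<Sum>x\<in>Sigma ?Sets (\<lambda>S. P S \<times> ?Perms). G x)"
    using fin by (simp add: sum.Sigma sum.cartesian_product split_def)
  also have "\<dots> = detn n A"
    unfolding detn_def
  proof (rule sum.reindex_bij_witness[where j="\<lambda>(S, p, \<sigma>). \<sigma> \<circ> p"
        and i="\<lambda>q. (rows q, inv (perm q) \<circ> q, perm q)"])
    fix x assume "x \<in> Sigma ?Sets (\<lambda>S. P S \<times> ?Perms)"
    then obtain S p \<sigma> where x: "x = (S, p, \<sigma>)" and S: "S \<subseteq> {..<n}" "card S = k"
      and p: "p permutes {..<n}" "\<forall>t<k. p (sorted_list_of_set S ! t) = t" and \<sigma>: "\<sigma> permutes {..<k}"
      by (auto simp: P_def)
    note comp = permutes_compose_through_prefix[OF S p \<sigma>]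
    have "rows (\<sigma> \<circ> p) = S"
      using comp(2) by (simp add: rows_def)
    moreover have "perm (\<sigma> \<circ> p) = \<sigma>"
      using comp(3) unfolding perm_def calculation .
    moreover have "inv \<sigma> \<circ> (\<sigma> \<circ> p) = p"
      using permutes_inverses(2)[OF \<sigma>] by (simp add: fun_eq_iff)
    ultimately show "(rows ((\<lambda>(S, p, \<sigma>). \<sigma> \<circ> p) x), inv (perm ((\<lambda>(S, p, \<sigma>). \<sigma> \<circ> p) x)) \<circ>
        (\<lambda>(S, p, \<sigma>). \<sigma> \<circ> p) x, perm ((\<lambda>(S, p, \<sigma>). \<sigma> \<circ> p) x)) = x"
      by (simp add: x)
    show "(\<lambda>(S, p, \<sigma>). \<sigma> \<circ> p) x \<in> {p. p permutes {..<n}}"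
      using comp(1) by (simp add: x)
    show "of_int (sign ((\<lambda>(S, p, \<sigma>). \<sigma> \<circ> p) x)) * (\<Prod>i<n. A i ((\<lambda>(S, p, \<sigma>). \<sigma> \<circ> p) x i)) = G x"
      using detn_term_factor[OF S p \<sigma>] by (simp add: x G_def)
  next
    fix q assume "q \<in> {p. p permutes {..<n}}"
    then have q: "q permutes {..<n}" by simp
    note split = permutes_factor_through_prefix[OF q assms rows_def[of q] perm_def[of q]]
    show "(\<lambda>(S, p, \<sigma>). \<sigma> \<circ> p) (rows q, inv (perm q) \<circ> q, perm q) = q"
      using permutes_inverses(1)[OF split(2)] by (simp add: fun_eq_iff)
    show "(rows q, inv (perm q) \<circ> q, perm q) \<in> Sigma ?Sets (\<lambda>S. P S \<times> ?Perms)"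
      using split by (simp add: P_def)
  qed
  finally show ?thesis .
qed

lemma compl_cofactor_cong:
  assumes "S \<subseteq> {..<n}" "card S = k" "\<And>i j. i < n \<Longrightarrow> i \<notin> S \<Longrightarrow> k \<le> j \<Longrightarrow> A i j = B i j"
  shows "compl_cofactor n k A S = compl_cofactor n k B S"
  unfolding compl_cofactor_def
proof (intro sum.cong refl arg_cong2[where f="(*)"] prod.cong)
  fix p i assume "p \<in> {p. p permutes {..<n} \<and> (\<forall>t<k. p (sorted_list_of_set S ! t) = t)}"
    and "i \<in> {..<n} - S"
  then have "\<not> p i < k"
    using permutes_sorted_prefix_iff[OF finite_subset[OF assms(1)] assms(2)] by auto
  then show "A i (p i) = B i (p i)"
    using assms(3) \<open>i \<in> {..<n} - S\<close> by simp
qed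

text \<open>Expansion along the rows in \<open>S\<close> of the matrix whose first \<open>k\<close> columns are replaced by the
  columns \<open>T\<close> of \<open>A\<close>; it has two equal columns unless \<open>T = {..<k}\<close>.\<close>
lemma laplace_rows_other_cols:
  assumes "k \<le> n" and T: "T \<subseteq> {..<n}" "card T = k"
  shows "(\<Sum>S | S \<subseteq> {..<n} \<and> card S = k. compl_cofactor n k A S * minor k A S T) =
    (if T = {..<k} then detn n A else 0)"
proof -
  define B where "B i j = (if j < k then A i (sorted_list_of_set T ! j) else A i j)" for i j
  have cofactor: "compl_cofactor n k A S = compl_cofactor n k B S" if "S \<subseteq> {..<n}" "card S = k" for S
    using that by (intro compl_cofactor_cong) (auto simp: B_def)
  have minor: "minor k A S T = minor k B S {..<k}" for S
    unfolding minor_lessThan_cols unfolding minor_def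
  proof (intro sum.cong refl arg_cong2[where f="(*)"] prod.cong)
    fix \<sigma> t assume "\<sigma> \<in> {\<sigma>. \<sigma> permutes {..<k}}" "t \<in> {..<k}"
    then have "\<sigma> t < k"
      using permutes_in_image by fastforce
    then show "A (sorted_list_of_set S ! t) (sorted_list_of_set T ! \<sigma> t) = B (sorted_list_of_set S ! t) (\<sigma> t)"
      by (simp add: B_def)
  qed
  have "(\<Sum>S | S \<subseteq> {..<n} \<and> card S = k. compl_cofactor n k A S * minor k A S T) =
      (\<Sum>S | S \<subseteq> {..<n} \<and> card S = k. compl_cofactor n k B S * minor k B S {..<k})"
    by (rule sum.cong) (simp_all add: cofactor minor)
  also have "\<dots> = detn n B"
    by (rule detn_laplace_rows[OF assms(1)])
  also have "\<dots> = (if T = {..<k} then detn n A else 0)"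
  proof (cases "T = {..<k}")
    case True
    have "detn n B = detn n A"
      by (rule detn_cong) (simp add: B_def True nth_sorted_list_of_set_lessThan)
    then show ?thesis
      using True by simp
  next
    case False
    then have "\<not> T \<subseteq> {..<k}"
      using T(2) card_subset_eq[of "{..<k}" T] by auto
    then obtain j where j: "j \<in> T" "\<not> j < k"
      by auto
    have "j \<in> (\<lambda>t. sorted_list_of_set T ! t) ` {..<k}"
      using bij_betw_imp_surj_on[OF bij_betw_nth_sorted_list_of_set[OF finite_subset[OF T(1)] T(2)]] j(1)
      by simp
    then obtain t where "t < k" "sorted_list_of_set T ! t = j"
      by auto
    then have "detn n B = 0"
      using j T(1) assms(1) by (intro detn_identical_cols[of t n j]) (auto simp: B_def)
    then show ?thesis
      using False by simp
  qed
  finally show ?thesis .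
qed

section \<open>Injective maps as sorted subsets and permutations\<close>

lemma bij_betw_nth_sorted_list_of_set_permute:
  assumes "finite T" "card T = k" "\<sigma> permutes {..<k}"
  shows "bij_betw (\<lambda>t. sorted_list_of_set T ! \<sigma> t) {..<k} T"
  using bij_betw_trans[OF permutes_imp_bij[OF assms(3)] bij_betw_nth_sorted_list_of_set[OF assms(1,2)]]
  by (simp add: comp_def)

lemma injective_map_eq_sorted_perm:
  assumes \<phi>: "\<phi> \<in> PiE {..<k} (\<lambda>_. {..<n})" "inj_on \<phi> {..<k}"
  obtains \<sigma> where "\<sigma> permutes {..<k}"
    and "\<phi> = restrict (\<lambda>t. sorted_list_of_set (\<phi> ` {..<k}) ! \<sigma> t) {..<k}"
proof -
  define T where "T = \<phi> ` {..<k}"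
  let ?pick = "\<lambda>t. sorted_list_of_set T ! t"
  define \<sigma> where "\<sigma> t = (if t < k then inv_into {..<k} ?pick (\<phi> t) else t)" for t
  have bij: "bij_betw ?pick {..<k} T"
    using card_image[OF \<phi>(2)] by (intro bij_betw_nth_sorted_list_of_set) (auto simp: T_def)
  have "bij_betw (inv_into {..<k} ?pick \<circ> \<phi>) {..<k} {..<k}"
    using \<phi>(2) bij_betw_inv_into[OF bij] by (intro bij_betw_trans) (auto simp: bij_betw_def T_def)
  then have "bij_betw \<sigma> {..<k} {..<k}"
    by (rule bij_betw_cong[THEN iffD1, rotated]) (simp add: \<sigma>_def)
  then have "\<sigma> permutes {..<k}"
    by (rule bij_imp_permutes) (simp add: \<sigma>_def)
  moreover have "?pick (\<sigma> t) = \<phi> t" if "t < k" for t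
  proof -
    have "\<phi> t \<in> ?pick ` {..<k}"
      using bij_betw_imp_surj_on[OF bij] that by (simp add: T_def)
    then show ?thesis
      using that by (simp add: \<sigma>_def f_inv_into_f)
  qed
  then have "\<phi> = restrict (\<lambda>t. ?pick (\<sigma> t)) {..<k}"
    using \<phi>(1) by (auto simp: fun_eq_iff PiE_def extensional_def)
  ultimately show ?thesis
    using that by (simp add: T_def)
qed

lemma inj_on_sorted_perm_maps:
  fixes n :: nat
  shows "inj_on (\<lambda>(T, \<sigma>). restrict (\<lambda>t. sorted_list_of_set T ! \<sigma> t) {..<k})
    ({T. T \<subseteq> {..<n} \<and> card T = k} \<times> {\<sigma>. \<sigma> permutes {..<k}})"
    (is "inj_on ?map ?D")
proof (rule inj_onI)
  fix x y assume "x \<in> ?D" "y \<in> ?D" "?map x = ?map y"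
  then obtain T \<sigma> T' \<sigma>' where xy: "x = (T, \<sigma>)" "y = (T', \<sigma>')"
    and T: "T \<subseteq> {..<n}" "card T = k" "T' \<subseteq> {..<n}" "card T' = k"
    and \<sigma>: "\<sigma> permutes {..<k}" "\<sigma>' permutes {..<k}"
    and eq: "restrict (\<lambda>t. sorted_list_of_set T ! \<sigma> t) {..<k} = restrict (\<lambda>t. sorted_list_of_set T' ! \<sigma>' t) {..<k}"
    by auto
  have fin: "finite T" "finite T'"
    using finite_subset[OF T(1)] finite_subset[OF T(3)] by simp_all
  have "(\<lambda>t. sorted_list_of_set T ! \<sigma> t) ` {..<k} = (\<lambda>t. sorted_list_of_set T' ! \<sigma>' t) ` {..<k}"
    using eq by (metis image_restrict_eq)
  then have "T = T'"
    using bij_betw_imp_surj_on[OF bij_betw_nth_sorted_list_of_set_permute[OF fin(1) T(2) \<sigma>(1)]]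
      bij_betw_imp_surj_on[OF bij_betw_nth_sorted_list_of_set_permute[OF fin(2) T(4) \<sigma>(2)]] by simp
  have "\<sigma> t = \<sigma>' t" for t
  proof (cases "t < k")
    case True
    then have "sorted_list_of_set T ! \<sigma> t = sorted_list_of_set T ! \<sigma>' t"
      using eq \<open>T = T'\<close> by (metis lessThan_iff restrict_apply')
    then show ?thesis
      using inj_onD[OF bij_betw_imp_inj_on[OF bij_betw_nth_sorted_list_of_set[OF fin(1) T(2)]]] True
        permutes_in_image[OF \<sigma>(1)] permutes_in_image[OF \<sigma>(2)] by simp
  qed (use permutes_not_in[OF \<sigma>(1)] permutes_not_in[OF \<sigma>(2)] in simp)
  then show "x = y"
    using xy \<open>T = T'\<close> by auto
qed

lemma sum_injective_maps_by_image:
  fixes n :: nat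
  shows "(\<Sum>\<phi> | \<phi> \<in> PiE {..<k} (\<lambda>_. {..<n}) \<and> inj_on \<phi> {..<k}. F \<phi>) =
    (\<Sum>T | T \<subseteq> {..<n} \<and> card T = k. \<Sum>\<sigma> | \<sigma> permutes {..<k}.
        F (restrict (\<lambda>t. sorted_list_of_set T ! \<sigma> t) {..<k}))"
proof -
  let ?Sets = "{T. T \<subseteq> {..<n} \<and> card T = k}"
  let ?Perms = "{\<sigma>. \<sigma> permutes {..<k}}"
  let ?map = "\<lambda>(T, \<sigma>). restrict (\<lambda>t. sorted_list_of_set T ! \<sigma> t) {..<k}"
  have "inj_on ?map (?Sets \<times> ?Perms)"
    by (rule inj_on_sorted_perm_maps)
  moreover have "?map ` (?Sets \<times> ?Perms) = {\<phi>. \<phi> \<in> PiE {..<k} (\<lambda>_. {..<n}) \<and> inj_on \<phi> {..<k}}"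
  proof (intro equalityI subsetI)
    fix \<phi> assume "\<phi> \<in> ?map ` (?Sets \<times> ?Perms)"
    then obtain T \<sigma> where T: "T \<subseteq> {..<n}" "card T = k" and "\<sigma> permutes {..<k}"
      and \<phi>: "\<phi> = restrict (\<lambda>t. sorted_list_of_set T ! \<sigma> t) {..<k}"
      by auto
    then have "bij_betw (\<lambda>t. sorted_list_of_set T ! \<sigma> t) {..<k} T"
      using finite_subset[OF T(1)] by (intro bij_betw_nth_sorted_list_of_set_permute) simp_all
    then show "\<phi> \<in> {\<phi>. \<phi> \<in> PiE {..<k} (\<lambda>_. {..<n}) \<and> inj_on \<phi> {..<k}}"
      using T(1) unfolding \<phi> bij_betw_def by (auto simp: inj_on_def)
  next
    fix \<phi> assume "\<phi> \<in> {\<phi>. \<phi> \<in> PiE {..<k} (\<lambda>_. {..<n}) \<and> inj_on \<phi> {..<k}}"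
    then have \<phi>: "\<phi> \<in> PiE {..<k} (\<lambda>_. {..<n})" "inj_on \<phi> {..<k}"
      by auto
    obtain \<sigma> where "\<sigma> permutes {..<k}" "\<phi> = ?map (\<phi> ` {..<k}, \<sigma>)"
      using injective_map_eq_sorted_perm[OF \<phi>] by auto
    moreover have "\<phi> ` {..<k} \<in> ?Sets"
      using \<phi> card_image by (fastforce simp: PiE_def)
    ultimately show "\<phi> \<in> ?map ` (?Sets \<times> ?Perms)"
      by blast
  qed
  ultimately show ?thesis
    by (simp add: sum.reindex_bij_betw[symmetric, of ?map] bij_betw_def sum.cartesian_product split_def)
qed

lemma permutes_extend_inj:
  fixes j :: "nat \<Rightarrow> nat"
  assumes inj: "inj_on j {..<k}" and sub: "j ` {..<k} \<subseteq> {..<n}" and "k \<le> n"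
  obtains \<rho> where "\<rho> permutes {..<n}" "\<And>t. t < k \<Longrightarrow> \<rho> t = j t"
proof -
  define V where "V = {..<n} - j ` {..<k}"
  have "card (j ` {..<k}) = k"
    using card_image[OF inj] by simp
  then have "card V = card {k..<n}"
    using card_Diff_subset[OF _ sub] by (simp add: V_def)
  then obtain h where h: "bij_betw h {k..<n} V"
    using finite_same_card_bij[of "{k..<n}" V] by (auto simp: V_def)
  define \<rho> where "\<rho> t = (if t < k then j t else if t < n then h t else t)" for t
  have "bij_betw \<rho> {..<k} (j ` {..<k})"
    using inj by (simp add: bij_betw_def inj_on_def image_def \<rho>_def)
  moreover have "bij_betw \<rho> {k..<n} V"
    using h by (rule bij_betw_cong[THEN iffD1, rotated]) (simp add: \<rho>_def)
  ultimately have "bij_betw \<rho> ({..<k} \<union> {k..<n}) (j ` {..<k} \<union> V)"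
    by (rule bij_betw_combine) (auto simp: V_def)
  moreover have "{..<k} \<union> {k..<n} = {..<n}" "j ` {..<k} \<union> V = {..<n}"
    using sub \<open>k \<le> n\<close> by (auto simp: V_def)
  ultimately have "\<rho> permutes {..<n}"
    by (intro bij_imp_permutes) (auto simp: \<rho>_def)
  then show ?thesis
    using that by (simp add: \<rho>_def)
qed

lemma permutes_reorder_to_prefix:
  fixes P :: "nat set" and \<phi> :: "nat \<Rightarrow> nat"
  assumes P: "P \<subseteq> {..<r}" "\<phi> ` P \<subseteq> {..<n}" "inj_on \<phi> P"
  obtains k \<pi> \<rho> where "k \<le> r" "k \<le> n" "\<pi> permutes {..<r}" "\<rho> permutes {..<n}"
    "\<pi> ` {..<k} = P" "\<And>t. t < k \<Longrightarrow> \<phi> (\<pi> t) = \<rho> t"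
proof -
  define k where "k = card P"
  define \<iota> where "\<iota> t = sorted_list_of_set P ! t" for t
  have \<iota>: "bij_betw \<iota> {..<k} P"
    unfolding \<iota>_def k_def using P(1) by (intro bij_betw_nth_sorted_list_of_set) (auto intro: finite_subset)
  have "k \<le> r" "k \<le> n"
    using card_mono[OF _ P(1)] card_mono[OF _ P(2)] card_image[OF P(3)] by (auto simp: k_def)
  obtain \<pi> where \<pi>: "\<pi> permutes {..<r}" "\<And>t. t < k \<Longrightarrow> \<pi> t = \<iota> t"
    using permutes_extend_inj[of \<iota> k r] \<iota> P(1) \<open>k \<le> r\<close> by (auto simp: bij_betw_def)
  have "inj_on (\<phi> \<circ> \<iota>) {..<k}"
    using comp_inj_on[of \<iota> "{..<k}" \<phi>] \<iota> P(3) by (simp add: bij_betw_def)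
  moreover have "(\<phi> \<circ> \<iota>) ` {..<k} \<subseteq> {..<n}"
    using bij_betw_apply[OF \<iota>] P(2) by auto
  ultimately obtain \<rho> where \<rho>: "\<rho> permutes {..<n}" "\<And>t. t < k \<Longrightarrow> \<rho> t = \<phi> (\<iota> t)"
    using permutes_extend_inj[of "\<phi> \<circ> \<iota>" k n] \<open>k \<le> n\<close> by auto
  have "\<pi> ` {..<k} = P"
    using \<pi>(2) bij_betw_imp_surj_on[OF \<iota>] by auto
  then show ?thesis
    by (rule that[OF \<open>k \<le> r\<close> \<open>k \<le> n\<close> \<pi>(1) \<rho>(1)]) (simp add: \<pi>(2) \<rho>(2))
qed

lemma sum_PiE_insert:
  assumes "a \<notin> T"
  shows "(\<Sum>\<psi>\<in>PiE (insert a T) B. F \<psi>) = (\<Sum>(l, \<phi>)\<in>B a \<times> PiE T B. F (\<phi>(a := l)))"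
proof -
  have "inj_on (\<lambda>(l, \<phi>). \<phi>(a := l)) (B a \<times> PiE T B)"
    using inj_combinator[OF assms, of B] by simp
  then show ?thesis
    unfolding PiE_insert_eq by (simp add: sum.reindex split_def)
qed

lemma map_upt_fun_upd: "i < r \<Longrightarrow> map (x(i := v)) [0..<r] = (map x [0..<r])[i := v]"
  by (rule nth_equalityI) auto

section \<open>Congruence modulo the relations of the exterior power\<close>

global_interpretation free: module "pscale :: 'a::comm_ring_1 \<Rightarrow> ('i \<Rightarrow> 'a) \<Rightarrow> 'i \<Rightarrow> 'a"
  by unfold_locales (auto simp: pscale_def fun_eq_iff algebra_simps)

global_interpretation ideal: module "(*) :: 'a::comm_ring_1 \<Rightarrow> 'a \<Rightarrow> 'a"
  by unfold_locales (auto simp: algebra_simps)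

definition ext_kernel :: "('a::comm_ring_1 \<Rightarrow> 'm::ab_group_add \<Rightarrow> 'm) \<Rightarrow> nat \<Rightarrow> ('m list \<Rightarrow> 'a) set" where
  "ext_kernel sc r = free.span (ext_rels sc r)"

definition ext_eq :: "('a::comm_ring_1 \<Rightarrow> 'm::ab_group_add \<Rightarrow> 'm) \<Rightarrow> nat \<Rightarrow>
    ('m list \<Rightarrow> 'a) \<Rightarrow> ('m list \<Rightarrow> 'a) \<Rightarrow> bool" where
  "ext_eq sc r a b \<longleftrightarrow> a - b \<in> ext_kernel sc r"

lemma ext_eq_refl: "ext_eq sc r a a"
  by (simp add: ext_eq_def ext_kernel_def free.span_zero)

lemma ext_eq_sym: "ext_eq sc r a b \<Longrightarrow> ext_eq sc r b a"
  unfolding ext_eq_def ext_kernel_def using free.span_neg by fastforce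

lemma ext_eq_trans [trans]: "ext_eq sc r a b \<Longrightarrow> ext_eq sc r b c \<Longrightarrow> ext_eq sc r a c"
  unfolding ext_eq_def ext_kernel_def using free.span_add by fastforce

lemma ext_eq_add: "ext_eq sc r a b \<Longrightarrow> ext_eq sc r c d \<Longrightarrow> ext_eq sc r (a + c) (b + d)"
  unfolding ext_eq_def ext_kernel_def using free.span_add by (fastforce simp: algebra_simps)

lemma ext_eq_scale: "ext_eq sc r a b \<Longrightarrow> ext_eq sc r (pscale c a) (pscale c b)"
  unfolding ext_eq_def ext_kernel_def
  using free.span_scale by (fastforce simp: free.scale_right_diff_distrib)

lemma ext_eq_sum: "(\<And>x. x \<in> A \<Longrightarrow> ext_eq sc r (f x) (g x)) \<Longrightarrow> ext_eq sc r (sum f A) (sum g A)"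
  unfolding ext_eq_def ext_kernel_def using free.span_sum[of A "\<lambda>x. f x - g x"]
  by (simp add: sum_subtractf)

lemma subspace_ext_image_sub: "free.subspace (ext_image_sub sc N r)"
  by (simp add: ext_image_sub_def)

lemma ext_eq_in_ext_image_sub:
  assumes "ext_eq sc r a b" "b \<in> ext_image_sub sc N r"
  shows "a \<in> ext_image_sub sc N r"
proof -
  have "a - b \<in> ext_image_sub sc N r"
    using assms(1) free.span_mono[of "ext_rels sc r"]
    by (auto simp: ext_eq_def ext_kernel_def ext_image_sub_def)
  then show ?thesis
    using free.span_add[OF _ assms(2)[unfolded ext_image_sub_def]] by (force simp: ext_image_sub_def)
qed

lemma subspace_colon_ideal:
  assumes "free.subspace E"
  shows "ideal.subspace {a. \<forall>f\<in>F. pscale a f \<in> E}"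
  unfolding ideal.subspace_def
proof safe
  fix a b c f assume "f \<in> F" "\<forall>f\<in>F. pscale a f \<in> E" "\<forall>f\<in>F. pscale b f \<in> E"
  then show "pscale (a + b) f \<in> E" "pscale (c * a) f \<in> E"
    using free.subspace_add[OF assms] free.subspace_scale[OF assms, of "pscale a f" c]
    by (simp_all add: free.scale_left_distrib)
qed (use free.subspace_0[OF assms] in simp)

section \<open>Wedges of generators and relations\<close>

context module
begin

lemma subspace_scale_cancel:
  assumes "subspace E" "u * v = 1" "scale (u * c) x \<in> E"
  shows "scale c x \<in> E"
proof -
  have "v * (u * c) = (u * v) * c"
    by (simp only: ac_simps)
  then show ?thesis
    using subspace_scale[OF assms(1,3), of v] assms(2) by simp
qed

lemma scale_span_in_subspace:
  assumes "subspace E" "\<And>x. x \<in> S \<Longrightarrow> scale a x \<in> E" "f \<in> span S"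
  shows "scale a f \<in> E"
  using assms(3)
proof (induction rule: span_induct_alt)
  case base
  show ?case
    unfolding scale_zero_right by (rule subspace_0[OF assms(1)])
next
  case (step c x f)
  have eq: "scale a (scale c x + f) = scale c (scale a x) + scale a f"
    by (simp only: scale_right_distrib scale_scale mult.commute)
  show ?case
    unfolding eq by (rule subspace_add[OF assms(1) subspace_scale[OF assms(1) assms(2)[OF step(1)]] step(2)])
qed

lemma span_image_lessThanE:
  fixes n :: nat
  assumes "v \<in> span (g ` {..<n})"
  obtains c where "v = (\<Sum>l<n. scale (c l) (g l))"
proof -
  have "\<exists>c. v = (\<Sum>l<n. scale (c l) (g l))"
    using assms
  proof (induction rule: span_induct_alt)
    case base
    show ?case
      by (intro exI[of _ "\<lambda>_. 0"]) simp
  next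
    case (step a x v)
    then obtain j c where "j < n" "x = g j" "v = (\<Sum>l<n. scale (c l) (g l))"
      by auto
    moreover have "(\<Sum>l<n. scale (if l = j then a else 0) (g l)) = (\<Sum>l<n. if l = j then scale a (g j) else 0)"
      by (intro sum.cong) auto
    then have "(\<Sum>l<n. scale (c l + (if l = j then a else 0)) (g l)) =
        scale a (g j) + (\<Sum>l<n. scale (c l) (g l))"
      using \<open>j < n\<close> by (simp add: scale_left_distrib sum.distrib sum.delta)
    ultimately show ?case
      by (intro exI[of _ "\<lambda>l. c l + (if l = j then a else 0)"]) simp
  qed
  then show ?thesis
    using that by blast
qed

lemma decompose_mod_span:
  fixes n :: nat
  assumes gen: "\<And>m. \<exists>v\<in>span (g ` {..<n}). \<exists>y\<in>N. m = v + y"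
  obtains p where "\<And>m. snd (p m) \<in> N" "\<And>m. m = (\<Sum>l<n. scale (fst (p m) l) (g l)) + snd (p m)"
proof -
  have "\<forall>m. \<exists>p. snd p \<in> N \<and> m = (\<Sum>l<n. scale (fst p l) (g l)) + snd p"
  proof
    fix m
    obtain v w where "v \<in> span (g ` {..<n})" "w \<in> N" "m = v + w"
      using gen[of m] by blast
    moreover obtain c where "v = (\<Sum>l<n. scale (c l) (g l))"
      using span_image_lessThanE[OF \<open>v \<in> span (g ` {..<n})\<close>] .
    ultimately show "\<exists>p. snd p \<in> N \<and> m = (\<Sum>l<n. scale (fst p l) (g l)) + snd p"
      by (intro exI[of _ "(c, w)"]) simp
  qed
  then obtain p where p: "\<And>m. snd (p m) \<in> N \<and> m = (\<Sum>l<n. scale (fst (p m) l) (g l)) + snd (p m)"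
    by (metis choice)
  show ?thesis
    by (rule that[OF conjunct1[OF p] conjunct2[OF p]])
qed

lemma ext_eq_fun_upd_add:
  "i < r \<Longrightarrow> ext_eq scale r (ebas (map (x(i := y + z)) [0..<r]))
    (ebas (map (x(i := y)) [0..<r]) + ebas (map (x(i := z)) [0..<r]))"
  unfolding ext_eq_def ext_kernel_def ext_rels_def map_upt_fun_upd diff_diff_eq[symmetric]
  by (rule free.span_base) fastforce

lemma ext_eq_fun_upd_scale:
  "i < r \<Longrightarrow> ext_eq scale r (ebas (map (x(i := scale c y)) [0..<r])) (pscale c (ebas (map (x(i := y)) [0..<r])))"
  unfolding ext_eq_def ext_kernel_def ext_rels_def map_upt_fun_upd
  by (rule free.span_base) fastforce

lemma ext_eq_repeated:
  "i < r \<Longrightarrow> j < r \<Longrightarrow> i \<noteq> j \<Longrightarrow> x i = x j \<Longrightarrow> ext_eq scale r (ebas (map x [0..<r])) 0"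
  unfolding ext_eq_def ext_kernel_def ext_rels_def
  by (rule free.span_base) fastforce

lemma ext_eq_fun_upd_sum:
  assumes "finite L" "i < r"
  shows "ext_eq scale r (ebas (map (x(i := \<Sum>l\<in>L. scale (c l) (y l))) [0..<r]))
    (\<Sum>l\<in>L. pscale (c l) (ebas (map (x(i := y l)) [0..<r])))"
  using assms(1)
proof (induction L rule: finite_induct)
  case empty
  show ?case
    using ext_eq_fun_upd_scale[OF assms(2), of x 0 0]
    by (simp only: scale_zero_left free.scale_zero_left sum.empty)
next
  case (insert l L)
  show ?case
    unfolding sum.insert[OF insert.hyps]
    by (rule ext_eq_trans[OF ext_eq_fun_upd_add[OF assms(2)]
          ext_eq_add[OF ext_eq_fun_upd_scale[OF assms(2)] insert.IH]])
qed

lemma ext_eq_swap: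
  assumes "a < r" "b < r" "a \<noteq> b"
  shows "ext_eq scale r (ebas (map (x(a := u, b := v)) [0..<r])) (- ebas (map (x(a := v, b := u)) [0..<r]))"
proof -
  define e where "e p q = (ebas (map (x(a := p, b := q)) [0..<r]) :: 'b list \<Rightarrow> 'a)" for p q
  have add_a: "ext_eq scale r (e (p + p') q) (e p q + e p' q)" for p p' q
    using ext_eq_fun_upd_add[OF assms(1), of "x(b := q)" p p'] assms(3)
    by (simp add: e_def fun_upd_twist)
  have add_b: "ext_eq scale r (e p (q + q')) (e p q + e p q')" for p q q'
    using ext_eq_fun_upd_add[OF assms(2), of "x(a := p)" q q'] by (simp add: e_def)
  have diag: "ext_eq scale r (e p p) 0" for p
    unfolding e_def by (rule ext_eq_repeated[OF assms]) simp
  have "ext_eq scale r 0 (e (u + v) (u + v))"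
    by (rule ext_eq_sym[OF diag])
  also have "ext_eq scale r (e (u + v) (u + v)) (e u (u + v) + e v (u + v))"
    by (rule add_a)
  also have "ext_eq scale r (e u (u + v) + e v (u + v)) ((e u u + e u v) + (e v u + e v v))"
    by (intro ext_eq_add add_b)
  also have "ext_eq scale r ((e u u + e u v) + (e v u + e v v)) ((0 + e u v) + (e v u + 0))"
    by (intro ext_eq_add diag ext_eq_refl)
  finally have "ext_eq scale r (e u v + e v u) 0"
    by (simp add: ext_eq_sym)
  then show ?thesis
    by (simp add: ext_eq_def e_def)
qed

lemma ext_eq_transpose:
  assumes "a < r" "b < r" "a \<noteq> b"
  shows "ext_eq scale r (ebas (map (x \<circ> Transposition.transpose a b) [0..<r])) (- ebas (map x [0..<r]))"
proof -
  have "x \<circ> Transposition.transpose a b = x(a := x b, b := x a)"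
    by (auto simp: fun_eq_iff Transposition.transpose_def)
  then show ?thesis
    using ext_eq_swap[OF assms, of x "x b" "x a"] by simp
qed

lemma ext_eq_permute:
  assumes "p permutes {..<r}"
  shows "ext_eq scale r (ebas (map (x \<circ> p) [0..<r])) (pscale (of_int (sign p)) (ebas (map x [0..<r])))"
  using assms finite_lessThan
proof (induction p arbitrary: x rule: permutes_induct)
  case id
  show ?case
    by (simp add: ext_eq_refl)
next
  case (swap a b p)
  let ?t = "Transposition.transpose a b"
  have "sign (?t \<circ> p) = - sign p"
    using swap.hyps permutes_swap_id[of a "{..<r}" b]
    by (simp add: sign_compose sign_swap_id permutes_imp_permutation[OF finite_lessThan])
  then have "pscale (of_int (sign (?t \<circ> p))) (ebas (map x [0..<r])) =
      pscale (of_int (sign p)) (- ebas (map x [0..<r]))"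
    by (simp add: free.scale_minus_left free.scale_minus_right)
  moreover have "ext_eq scale r (ebas (map ((x \<circ> ?t) \<circ> p) [0..<r]))
      (pscale (of_int (sign p)) (ebas (map (x \<circ> ?t) [0..<r])))"
    by (rule swap.IH)
  moreover have "ext_eq scale r (pscale (of_int (sign p)) (ebas (map (x \<circ> ?t) [0..<r])))
      (pscale (of_int (sign p)) (- ebas (map x [0..<r])))"
    using swap.hyps by (intro ext_eq_scale ext_eq_transpose) auto
  ultimately show ?case
    by (metis ext_eq_trans comp_assoc)
qed

lemma ext_eq_multilinear:
  assumes "finite L" "finite T" "T \<subseteq> {..<r}"
  shows "ext_eq scale r (ebas (map (\<lambda>i. if i \<in> T then \<Sum>l\<in>L. scale (B i l) (h i l) else x i) [0..<r]))
    (\<Sum>\<phi>\<in>PiE T (\<lambda>_. L). pscale (\<Prod>i\<in>T. B i (\<phi> i))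
      (ebas (map (\<lambda>i. if i \<in> T then h i (\<phi> i) else x i) [0..<r])))"
  using assms(2,3)
proof (induction T arbitrary: x rule: finite_induct)
  case empty
  show ?case
    by (simp add: ext_eq_refl)
next
  case (insert a T)
  let ?S = "\<Sum>l\<in>L. scale (B a l) (h a l)"
  define y where "y \<phi> i = (if i \<in> T then h i (\<phi> i) else x i)" for \<phi> i
  define F where "F \<psi> = pscale (\<Prod>i\<in>insert a T. B i (\<psi> i))
    (ebas (map (\<lambda>i. if i \<in> insert a T then h i (\<psi> i) else x i) [0..<r]))" for \<psi>
  have a: "a < r" "a \<notin> T"
    using insert by auto
  have "(\<lambda>i. if i \<in> insert a T then \<Sum>l\<in>L. scale (B i l) (h i l) else x i) =
      (\<lambda>i. if i \<in> T then \<Sum>l\<in>L. scale (B i l) (h i l) else (x(a := ?S)) i)"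
    using a by (auto simp: fun_eq_iff)
  moreover have "(\<lambda>i. if i \<in> T then h i (\<phi> i) else (x(a := ?S)) i) = (y \<phi>)(a := ?S)" for \<phi>
    using a by (auto simp: fun_eq_iff y_def)
  ultimately have "ext_eq scale r
      (ebas (map (\<lambda>i. if i \<in> insert a T then \<Sum>l\<in>L. scale (B i l) (h i l) else x i) [0..<r]))
      (\<Sum>\<phi>\<in>PiE T (\<lambda>_. L). pscale (\<Prod>i\<in>T. B i (\<phi> i)) (ebas (map ((y \<phi>)(a := ?S)) [0..<r])))"
    using insert.IH[of "x(a := ?S)"] insert.prems by simp
  also have "ext_eq scale r \<dots> (\<Sum>\<phi>\<in>PiE T (\<lambda>_. L). pscale (\<Prod>i\<in>T. B i (\<phi> i))
      (\<Sum>l\<in>L. pscale (B a l) (ebas (map ((y \<phi>)(a := h a l)) [0..<r]))))"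
    by (intro ext_eq_sum ext_eq_scale ext_eq_fun_upd_sum assms(1) a)
  also have "\<dots> = (\<Sum>(l, \<phi>)\<in>L \<times> PiE T (\<lambda>_. L).
      pscale (B a l * (\<Prod>i\<in>T. B i (\<phi> i))) (ebas (map ((y \<phi>)(a := h a l)) [0..<r])))"
    by (simp add: sum.cartesian_product[symmetric] sum.swap[of _ "PiE T (\<lambda>_. L)"]
        free.scale_sum_right mult.commute)
  also have "\<dots> = (\<Sum>\<psi>\<in>PiE (insert a T) (\<lambda>_. L). F \<psi>)"
  proof -
    have "(\<Prod>i\<in>T. B i ((\<phi>(a := l)) i)) = (\<Prod>i\<in>T. B i (\<phi> i))" for l \<phi>
      using a by (intro prod.cong) auto
    then have prod_upd: "(\<Prod>i\<in>insert a T. B i ((\<phi>(a := l)) i)) = B a l * (\<Prod>i\<in>T. B i (\<phi> i))" for l \<phi>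
      using a insert.hyps(1) by simp
    have map_upd: "(\<lambda>i. if i \<in> insert a T then h i ((\<phi>(a := l)) i) else x i) = (y \<phi>)(a := h a l)" for l \<phi>
      using a by (auto simp: fun_eq_iff y_def)
    show ?thesis
      unfolding sum_PiE_insert[OF a(2)] F_def prod_upd map_upd by (simp add: sum.cartesian_product)
  qed
  finally show ?case
    by (simp only: F_def)
qed

lemma ext_eq_sum_injective_maps:
  fixes n :: nat
  assumes "k \<le> r"
  shows "ext_eq scale r
    (\<Sum>\<phi>\<in>PiE {..<k} (\<lambda>_. {..<n}). pscale (c \<phi>) (ebas (map (\<lambda>t. if t < k then g (\<phi> t) else x t) [0..<r])))
    (\<Sum>\<phi> | \<phi> \<in> PiE {..<k} (\<lambda>_. {..<n}) \<and> inj_on \<phi> {..<k}.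
      pscale (c \<phi>) (ebas (map (\<lambda>t. if t < k then g (\<phi> t) else x t) [0..<r])))"
    (is "ext_eq scale r (\<Sum>\<phi>\<in>?Maps. ?term \<phi>) _")
proof -
  have "ext_eq scale r (?term \<phi>) (if inj_on \<phi> {..<k} then ?term \<phi> else 0)" for \<phi>
  proof (cases "inj_on \<phi> {..<k}")
    case False
    then obtain s t where "s < k" "t < k" "s \<noteq> t" "\<phi> s = \<phi> t"
      unfolding inj_on_def by auto
    then have "ext_eq scale r (ebas (map (\<lambda>t. if t < k then g (\<phi> t) else x t) [0..<r])) 0"
      using assms by (intro ext_eq_repeated[of s r t]) auto
    then show ?thesis
      using False ext_eq_scale by (fastforce simp: free.scale_zero_right)
  qed (simp add: ext_eq_refl)
  then have "ext_eq scale r (\<Sum>\<phi>\<in>?Maps. ?term \<phi>) (\<Sum>\<phi>\<in>?Maps. if inj_on \<phi> {..<k} then ?term \<phi> else 0)"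
    by (rule ext_eq_sum)
  then show ?thesis
    by (simp add: sum.inter_filter finite_PiE)
qed

lemma ext_eq_lincomb_prefix:
  assumes "k \<le> r"
  shows "ext_eq scale r (ebas (map (\<lambda>t. if t < k then \<Sum>l<n. scale (B t l) (g l) else x t) [0..<r]))
    (\<Sum>T | T \<subseteq> {..<n} \<and> card T = k. pscale (minor k B {..<k} T)
      (ebas (map (\<lambda>t. if t < k then g (sorted_list_of_set T ! t) else x t) [0..<r])))"
proof -
  let ?Maps = "PiE {..<k} (\<lambda>_. {..<n})"
  define w where "w \<phi> = (ebas (map (\<lambda>t. if t < k then g (\<phi> t) else x t) [0..<r]) :: 'b list \<Rightarrow> 'a)"
    for \<phi>
  define c where "c \<phi> = (\<Prod>t<k. B t (\<phi> t))" for \<phi>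
  have "ext_eq scale r (ebas (map (\<lambda>t. if t < k then \<Sum>l<n. scale (B t l) (g l) else x t) [0..<r]))
      (\<Sum>\<phi>\<in>?Maps. pscale (c \<phi>) (w \<phi>))"
    using ext_eq_multilinear[of "{..<n}" "{..<k}" r B "\<lambda>_. g" x] assms
    by (simp add: w_def c_def)
  also have "ext_eq scale r \<dots> (\<Sum>\<phi> | \<phi> \<in> ?Maps \<and> inj_on \<phi> {..<k}. pscale (c \<phi>) (w \<phi>))"
    unfolding w_def by (rule ext_eq_sum_injective_maps[OF assms])
  also have "\<dots> = (\<Sum>T | T \<subseteq> {..<n} \<and> card T = k. \<Sum>\<sigma> | \<sigma> permutes {..<k}.
      pscale (c (restrict (\<lambda>t. sorted_list_of_set T ! \<sigma> t) {..<k}))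
        (w (restrict (\<lambda>t. sorted_list_of_set T ! \<sigma> t) {..<k})))"
    by (rule sum_injective_maps_by_image)
  also have "ext_eq scale r \<dots> (\<Sum>T | T \<subseteq> {..<n} \<and> card T = k. \<Sum>\<sigma> | \<sigma> permutes {..<k}.
      pscale (c (restrict (\<lambda>t. sorted_list_of_set T ! \<sigma> t) {..<k}))
        (pscale (of_int (sign \<sigma>)) (w (\<lambda>t. sorted_list_of_set T ! t))))"
  proof (intro ext_eq_sum ext_eq_scale)
    fix T \<sigma> assume "\<sigma> \<in> {\<sigma>. \<sigma> permutes {..<k}}"
    then have \<sigma>: "\<sigma> permutes {..<k}" by simp
    then have "\<sigma> permutes {..<r}"
      using permutes_subset assms by fastforce
    moreover have "(\<lambda>t. if t < k then g (restrict (\<lambda>t. sorted_list_of_set T ! \<sigma> t) {..<k} t) else x t) =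
        (\<lambda>t. if t < k then g (sorted_list_of_set T ! t) else x t) \<circ> \<sigma>"
      using permutes_in_image[OF \<sigma>] permutes_not_in[OF \<sigma>] by (auto simp: fun_eq_iff)
    ultimately show "ext_eq scale r (w (restrict (\<lambda>t. sorted_list_of_set T ! \<sigma> t) {..<k}))
        (pscale (of_int (sign \<sigma>)) (w (\<lambda>t. sorted_list_of_set T ! t)))"
      unfolding w_def by (simp add: ext_eq_permute)
  qed
  also have "\<dots> = (\<Sum>T | T \<subseteq> {..<n} \<and> card T = k. pscale (minor k B {..<k} T)
      (w (\<lambda>t. sorted_list_of_set T ! t)))"
    by (simp add: minor_lessThan_rows c_def free.scale_sum_left mult.commute)
  finally show ?thesis
    by (simp add: w_def)
qed

lemma detn_scale_ebas_prefix_in_ext_image_sub: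
  assumes rel: "\<And>i. i < n \<Longrightarrow> (\<Sum>l<n. scale (A i l) (g l)) \<in> N"
    and "k \<le> n" "k \<le> r" and y: "\<And>t. k \<le> t \<Longrightarrow> t < r \<Longrightarrow> y t \<in> N"
  shows "pscale (detn n A) (ebas (map (\<lambda>t. if t < k then g t else y t) [0..<r])) \<in> ext_image_sub scale N r"
proof -
  let ?Sets = "{S. S \<subseteq> {..<n} \<and> card S = k}"
  define w where "w T = (ebas (map (\<lambda>t. if t < k then g (sorted_list_of_set T ! t) else y t) [0..<r])
    :: 'b list \<Rightarrow> 'a)" for T
  define R where "R = (\<Sum>S\<in>?Sets. pscale (compl_cofactor n k A S)
    (ebas (map (\<lambda>t. if t < k then (\<Sum>l<n. scale (A (sorted_list_of_set S ! t) l) (g l)) else y t) [0..<r])))"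
  have "R \<in> ext_image_sub scale N r"
    unfolding R_def ext_image_sub_def
  proof (intro free.span_sum free.span_scale free.span_base UnI1 CollectI exI conjI)
    fix S assume "S \<in> ?Sets"
    then have "sorted_list_of_set S ! t < n" if "t < k" for t
      using bij_betw_apply[OF bij_betw_nth_sorted_list_of_set[of S k]] that finite_subset[of S "{..<n}"]
      by auto
    then show "set (map (\<lambda>t. if t < k then (\<Sum>l<n. scale (A (sorted_list_of_set S ! t) l) (g l)) else y t) [0..<r]) \<subseteq> N"
      using rel y by auto
  qed simp_all
  have "ext_eq scale r R (\<Sum>S\<in>?Sets. pscale (compl_cofactor n k A S)
      (\<Sum>T\<in>?Sets. pscale (minor k A S T) (w T)))"
  proof (unfold R_def, intro ext_eq_sum ext_eq_scale)
    fix S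
    have "minor k (\<lambda>t. A (sorted_list_of_set S ! t)) {..<k} T = minor k A S T" for T
      unfolding minor_lessThan_rows by (simp add: minor_def)
    then show "ext_eq scale r (ebas (map (\<lambda>t. if t < k then (\<Sum>l<n. scale (A (sorted_list_of_set S ! t) l) (g l)) else y t) [0..<r]))
        (\<Sum>T\<in>?Sets. pscale (minor k A S T) (w T))"
      using ext_eq_lincomb_prefix[OF \<open>k \<le> r\<close>, where B="\<lambda>t. A (sorted_list_of_set S ! t)" and g=g and n=n and x=y]
      unfolding w_def by simp
  qed
  also have "(\<Sum>S\<in>?Sets. pscale (compl_cofactor n k A S) (\<Sum>T\<in>?Sets. pscale (minor k A S T) (w T))) =
      (\<Sum>T\<in>?Sets. pscale (\<Sum>S\<in>?Sets. compl_cofactor n k A S * minor k A S T) (w T))"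
    unfolding free.scale_sum_right free.scale_scale free.scale_sum_left by (rule sum.swap)
  also have "\<dots> = (\<Sum>T\<in>?Sets. if T = {..<k} then pscale (detn n A) (w T) else 0)"
  proof (rule sum.cong[OF refl])
    fix T assume "T \<in> ?Sets"
    then show "pscale (\<Sum>S\<in>?Sets. compl_cofactor n k A S * minor k A S T) (w T) =
        (if T = {..<k} then pscale (detn n A) (w T) else 0)"
      using laplace_rows_other_cols[OF \<open>k \<le> n\<close>, of T A] by (simp add: free.scale_zero_left)
  qed
  also have "\<dots> = pscale (detn n A) (w {..<k})"
  proof -
    have "finite ?Sets"
      by (rule finite_subset[of _ "Pow {..<n}"]) auto
    then show ?thesis
      using \<open>k \<le> n\<close> by (simp add: sum.delta)
  qed
  also have "w {..<k} = ebas (map (\<lambda>t. if t < k then g t else y t) [0..<r])"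
    unfolding w_def by (intro arg_cong[where f=ebas] map_cong) (auto simp: nth_sorted_list_of_set_lessThan)
  finally show ?thesis
    using ext_eq_in_ext_image_sub[OF ext_eq_sym] \<open>R \<in> ext_image_sub scale N r\<close> by blast
qed

lemma scale_ebas_permute_in_ext_image_sub:
  assumes \<pi>: "\<pi> permutes {..<r}"
    and "pscale c (ebas (map (z \<circ> \<pi>) [0..<r])) \<in> ext_image_sub scale N r"
  shows "pscale c (ebas (map z [0..<r])) \<in> ext_image_sub scale N r"
proof -
  have "ext_eq scale r (pscale c (ebas (map (z \<circ> \<pi>) [0..<r])))
      (pscale (of_int (sign \<pi>) * c) (ebas (map z [0..<r])))"
    using ext_eq_scale[OF ext_eq_permute[OF \<pi>, where x=z], where c=c]
    unfolding free.scale_scale by (simp add: mult.commute)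
  then have "pscale (of_int (sign \<pi>) * c) (ebas (map z [0..<r])) \<in> ext_image_sub scale N r"
    using assms(2) by (rule ext_eq_in_ext_image_sub[OF ext_eq_sym])
  then show ?thesis
    by (rule free.subspace_scale_cancel[OF subspace_ext_image_sub, rotated, where v="of_int (sign \<pi>)"])
      (simp flip: of_int_mult)
qed

lemma detn_scale_ebas_gens_in_ext_image_sub:
  assumes rel: "\<And>i. i < n \<Longrightarrow> (\<Sum>l<n. scale (A i l) (g l)) \<in> N"
    and P: "P \<subseteq> {..<r}" "\<phi> ` P \<subseteq> {..<n}"
    and z: "\<And>i. i \<in> P \<Longrightarrow> z i = g (\<phi> i)" "\<And>i. i < r \<Longrightarrow> i \<notin> P \<Longrightarrow> z i \<in> N"
  shows "pscale (detn n A) (ebas (map z [0..<r])) \<in> ext_image_sub scale N r"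
proof (cases "inj_on \<phi> P")
  case False
  then obtain i j where "i \<in> P" "j \<in> P" "i \<noteq> j" "\<phi> i = \<phi> j"
    unfolding inj_on_def by blast
  then have "ext_eq scale r (pscale (detn n A) (ebas (map z [0..<r]))) (pscale (detn n A) 0)"
    using P z(1) by (intro ext_eq_scale ext_eq_repeated[of i r j]) auto
  then show ?thesis
    by (rule ext_eq_in_ext_image_sub)
      (simp add: free.scale_zero_right free.subspace_0[OF subspace_ext_image_sub])
next
  case True
  obtain k \<pi> \<rho> where "k \<le> r" "k \<le> n" and \<pi>: "\<pi> permutes {..<r}" and \<rho>: "\<rho> permutes {..<n}"
    and img: "\<pi> ` {..<k} = P" and agree: "\<And>t. t < k \<Longrightarrow> \<phi> (\<pi> t) = \<rho> t"
    using permutes_reorder_to_prefix[OF P True] by blast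
  have prefix: "(z \<circ> \<pi>) t = g (\<rho> t)" if "t < k" for t
    using img agree z(1) that by auto
  have rest: "(z \<circ> \<pi>) t \<in> N" if "k \<le> t" "t < r" for t
  proof -
    have "\<pi> t \<notin> P"
      using that permutes_inj[OF \<pi>] img by (auto simp: inj_eq)
    then show ?thesis
      using z(2) permutes_in_image[OF \<pi>] that by auto
  qed
  have rel': "(\<Sum>l<n. scale (A i (\<rho> l)) (g (\<rho> l))) \<in> N" if "i < n" for i
    using rel[OF that] sum.reindex_bij_betw[OF permutes_imp_bij[OF \<rho>], of "\<lambda>l. scale (A i l) (g l)"]
    by simp
  have map_eq: "map (\<lambda>t. if t < k then g (\<rho> t) else (z \<circ> \<pi>) t) [0..<r] = map (z \<circ> \<pi>) [0..<r]"
    using prefix by (intro map_cong) auto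
  have "pscale (detn n (\<lambda>i l. A i (\<rho> l)))
      (ebas (map (\<lambda>t. if t < k then g (\<rho> t) else (z \<circ> \<pi>) t) [0..<r])) \<in> ext_image_sub scale N r"
    by (rule detn_scale_ebas_prefix_in_ext_image_sub) (use rel' rest \<open>k \<le> n\<close> \<open>k \<le> r\<close> in auto)
  then have permuted:
    "pscale (detn n (\<lambda>i l. A i (\<rho> l))) (ebas (map (z \<circ> \<pi>) [0..<r])) \<in> ext_image_sub scale N r"
    unfolding map_eq .
  then have "pscale (detn n (\<lambda>i l. A i (\<rho> l))) (ebas (map z [0..<r])) \<in> ext_image_sub scale N r"
    by (rule scale_ebas_permute_in_ext_image_sub[OF \<pi>])
  then have "pscale (of_int (sign \<rho>) * detn n A) (ebas (map z [0..<r])) \<in> ext_image_sub scale N r"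
    unfolding detn_permute_cols[OF \<rho>] .
  then show ?thesis
    by (rule free.subspace_scale_cancel[OF subspace_ext_image_sub, rotated, where v="of_int (sign \<rho>)"])
      (simp flip: of_int_mult)
qed

lemma detn_scale_ebas_in_ext_image_sub:
  assumes gen: "\<And>m. \<exists>v\<in>span (g ` {..<n}). \<exists>y\<in>N. m = v + y"
    and rel: "\<And>i. i < n \<Longrightarrow> (\<Sum>l<n. scale (A i l) (g l)) \<in> N"
    and "length xs = r"
  shows "pscale (detn n A) (ebas xs) \<in> ext_image_sub scale N r"
proof -
  obtain p where decomp: "\<And>m. snd (p m) \<in> N" "\<And>m. m = (\<Sum>l<n. scale (fst (p m) l) (g l)) + snd (p m)"
    using decompose_mod_span[OF gen] by blast
  \<comment> \<open>The extra index \<open>n\<close> carries the component of \<open>xs ! i\<close> in \<open>N\<close>, with coefficient \<open>1\<close>.\<close>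
  define B where "B i l = (if l < n then fst (p (xs ! i)) l else 1)" for i l
  define h where "h i l = (if l < n then g l else snd (p (xs ! i)))" for i l
  define z where "z \<phi> = (\<lambda>i. if i < r then h i (\<phi> i) else xs ! i)" for \<phi>
  have "(\<Sum>l\<in>{..n}. scale (B i l) (h i l)) = xs ! i" for i
    using decomp(2)[of "xs ! i"] by (simp add: lessThan_Suc_atMost[symmetric] B_def h_def add.commute)
  then have "map (\<lambda>i. if i \<in> {..<r} then \<Sum>l\<in>{..n}. scale (B i l) (h i l) else xs ! i) [0..<r] =
      map (\<lambda>i. xs ! i) [0..<r]"
    by (intro map_cong) simp_all
  also have "\<dots> = xs"
    using \<open>length xs = r\<close> map_nth[of xs] by simp
  finally have "map (\<lambda>i. if i \<in> {..<r} then \<Sum>l\<in>{..n}. scale (B i l) (h i l) else xs ! i) [0..<r] = xs" .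
  then have expand: "ext_eq scale r (ebas xs)
      (\<Sum>\<phi>\<in>PiE {..<r} (\<lambda>_. {..n}). pscale (\<Prod>i<r. B i (\<phi> i)) (ebas (map (z \<phi>) [0..<r])))"
    using ext_eq_multilinear[of "{..n}" "{..<r}" r B h "\<lambda>i. xs ! i"] by (simp add: z_def)
  have terms: "pscale (detn n A) (ebas (map (z \<phi>) [0..<r])) \<in> ext_image_sub scale N r" for \<phi>
    by (rule detn_scale_ebas_gens_in_ext_image_sub[OF rel, where P="{i. i < r \<and> \<phi> i < n}" and \<phi>=\<phi>])
      (auto simp: z_def h_def decomp(1))
  have "(\<Sum>\<phi>\<in>PiE {..<r} (\<lambda>_. {..n}). pscale (\<Prod>i<r. B i (\<phi> i))
      (pscale (detn n A) (ebas (map (z \<phi>) [0..<r])))) \<in> ext_image_sub scale N r"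
    by (rule free.subspace_sum[OF subspace_ext_image_sub], rule free.subspace_scale[OF subspace_ext_image_sub terms])
  moreover have "ext_eq scale r (pscale (detn n A) (ebas xs))
      (\<Sum>\<phi>\<in>PiE {..<r} (\<lambda>_. {..n}). pscale (\<Prod>i<r. B i (\<phi> i))
        (pscale (detn n A) (ebas (map (z \<phi>) [0..<r]))))"
    using ext_eq_scale[OF expand, of "detn n A"]
    by (simp add: free.scale_sum_right mult.commute)
  ultimately show ?thesis
    by (rule ext_eq_in_ext_image_sub[rotated])
qed

lemma detn_scale_free_tuples_in_ext_image_sub:
  assumes "\<forall>m. \<exists>v\<in>span (g ` {..<n}). \<exists>y\<in>N. m = v + y" and "\<forall>i<n. (\<Sum>l<n. scale (A i l) (g l)) \<in> N"
    and "f \<in> free_tuples scale r"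
  shows "pscale (detn n A) f \<in> ext_image_sub scale N r"
proof (rule free.scale_span_in_subspace[OF subspace_ext_image_sub])
  show "f \<in> free.span {ebas xs | xs. length xs = r}"
    using assms(3) unfolding free_tuples_def .
  fix x :: "'b list \<Rightarrow> 'a" assume "x \<in> {ebas xs | xs. length xs = r}"
  then obtain xs where "x = ebas xs" "length xs = r"
    by blast
  moreover have "pscale (detn n A) (ebas xs) \<in> ext_image_sub scale N r"
    by (rule detn_scale_ebas_in_ext_image_sub) (use assms(1,2) \<open>length xs = r\<close> in auto)
  ultimately show "pscale (detn n A) x \<in> ext_image_sub scale N r"
    by simp
qed

end

theorem lemma3p9:
  fixes sc :: "'a::comm_ring_1 \<Rightarrow> 'm::ab_group_add \<Rightarrow> 'm"
    and N :: "'m set" and r :: nat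
  assumes "module sc"
    and "module.subspace sc N"
    and "fin_gen_sub sc N"
    and "fin_presented sc"
    and "r > 0"
  shows "\<forall>a\<in>fitt_quot sc N. \<forall>f\<in>free_tuples sc r. pscale a f \<in> ext_image_sub sc N r"
proof -
  \<comment> \<open>Only \<open>module sc\<close> is needed: \<open>fitt_quot\<close> already ranges over all finite generating families
    of \<open>M/N\<close>, and the argument works for any subset \<open>N\<close> and any \<open>r\<close>.\<close>
  interpret module sc
    by (rule assms(1))
  let ?good = "{a. \<forall>f\<in>free_tuples sc r. pscale a f \<in> ext_image_sub sc N r}"
  have "{detn n A | n (g :: nat \<Rightarrow> 'm) A. (\<forall>m. \<exists>v\<in>span (g ` {..<n}). \<exists>y\<in>N. m = v + y) \<and>
      (\<forall>i<n. (\<Sum>j<n. sc (A i j) (g j)) \<in> N)} \<subseteq> ?good"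
    by (auto intro: detn_scale_free_tuples_in_ext_image_sub)
  then have "fitt_quot sc N \<subseteq> ?good"
    unfolding fitt_quot_def ideal_gen_def
    by (rule ideal.span_minimal[OF _ subspace_colon_ideal[OF subspace_ext_image_sub]])
  then show ?thesis
    by blast
qed

end
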